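(* Let $\mathbf{A}$ be an algebra and $B$ a subuniverse of $\mathbf{A}$. If $B$ absorbs $\mathbf{A}$, then $B$ Jónsson absorbs $\mathbf{A}$.
   Context: Absorption: a subuniverse $B$ of $\mathbf{A}$ absorbs $\mathbf{A}$ if there is an idempotent term $t$ of $\mathbf{A}$, say $n$-ary, such that $t(a_1,\dots,a_n)\in B$ whenever all but at most one of the $a_i$ lie in $B$ and the remaining one lies in $A$. Jónsson absorption: a subuniverse $B$ of $\mathbf{A}$ Jónsson absorbs $\mathbf{A}$ if there are ternary terms $d_0,\dots,d_n$ of $\mathbf{A}$ such that $d_i(b,a,b')\in B$ for all $i$, all $b,b'\in B$, $a\in A$; $d_i(x,y,y)=d_{i+1}(x,x,y)$ for all $i<n$ and all $x,y\in A$; $d_0(x,y,z)=x$ and $d_n(x,y,z)=z$ for all $x,y,z\in A$. *)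

theory Defs
  imports Main
begin

datatype 'f trm = Var nat | Op 'f "'f trm list"

fun wf_trm :: "('f \<Rightarrow> nat) \<Rightarrow> nat \<Rightarrow> 'f trm \<Rightarrow> bool" where
  "wf_trm ar n (Var i) = (i < n)"
| "wf_trm ar n (Op f ts) = (length ts = ar f \<and> (\<forall>t\<in>set ts. wf_trm ar n t))"

fun eval :: "('f \<Rightarrow> 'a list \<Rightarrow> 'a) \<Rightarrow> 'a list \<Rightarrow> 'f trm \<Rightarrow> 'a" where
  "eval op xs (Var i) = xs ! i"
| "eval op xs (Op f ts) = op f (map (eval op xs) ts)"

definition algebra :: "'a set \<Rightarrow> ('f \<Rightarrow> nat) \<Rightarrow> ('f \<Rightarrow> 'a list \<Rightarrow> 'a) \<Rightarrow> bool" where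
  "algebra A ar op \<longleftrightarrow> A \<noteq> {} \<and>
     (\<forall>f xs. length xs = ar f \<and> set xs \<subseteq> A \<longrightarrow> op f xs \<in> A)"

definition subuniverse :: "'a set \<Rightarrow> 'a set \<Rightarrow> ('f \<Rightarrow> nat) \<Rightarrow> ('f \<Rightarrow> 'a list \<Rightarrow> 'a) \<Rightarrow> bool" where
  "subuniverse B A ar op \<longleftrightarrow> B \<subseteq> A \<and>
     (\<forall>f xs. length xs = ar f \<and> set xs \<subseteq> B \<longrightarrow> op f xs \<in> B)"

definition idempotent_term :: "'a set \<Rightarrow> ('f \<Rightarrow> 'a list \<Rightarrow> 'a) \<Rightarrow> nat \<Rightarrow> 'f trm \<Rightarrow> bool" where
  "idempotent_term A op n t \<longleftrightarrow> (\<forall>x\<in>A. eval op (replicate n x) t = x)"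

definition absorbs :: "'a set \<Rightarrow> 'a set \<Rightarrow> ('f \<Rightarrow> nat) \<Rightarrow> ('f \<Rightarrow> 'a list \<Rightarrow> 'a) \<Rightarrow> bool" where
  "absorbs B A ar op \<longleftrightarrow> (\<exists>n t. wf_trm ar n t \<and> idempotent_term A op n t \<and>
     (\<forall>as. length as = n \<and> set as \<subseteq> A \<and> card {i. i < n \<and> as ! i \<notin> B} \<le> 1
            \<longrightarrow> eval op as t \<in> B))"

definition jonsson_absorbs :: "'a set \<Rightarrow> 'a set \<Rightarrow> ('f \<Rightarrow> nat) \<Rightarrow> ('f \<Rightarrow> 'a list \<Rightarrow> 'a) \<Rightarrow> bool" where
  "jonsson_absorbs B A ar op \<longleftrightarrow> (\<exists>(n::nat) (d::nat \<Rightarrow> 'f trm).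
     (\<forall>i\<le>n. wf_trm ar 3 (d i)) \<and>
     (\<forall>i\<le>n. \<forall>b\<in>B. \<forall>b'\<in>B. \<forall>a\<in>A. eval op [b, a, b'] (d i) \<in> B) \<and>
     (\<forall>i<n. \<forall>x\<in>A. \<forall>y\<in>A. eval op [x, y, y] (d i) = eval op [x, x, y] (d (Suc i))) \<and>
     (\<forall>x\<in>A. \<forall>y\<in>A. \<forall>z\<in>A. eval op [x, y, z] (d 0) = x \<and> eval op [x, y, z] (d n) = z))"

end

theory Submission
  imports Defs
begin

text \<open>If the idempotent n-ary term t witnesses that B absorbs A, then the terms
  d_i(x, y, z) = t(z, ..., z, y, x, ..., x), with y in the i-th argument, for i = 0, ..., n + 1,
  form a Jonsson chain: idempotence gives d_0(x, y, z) = t(x, ..., x) = x and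
  d_(n+1)(x, y, z) = t(z, ..., z) = z, the linking identity d_i(x, y, y) = d_(i+1)(x, x, y)
  holds already on argument lists, and d_i(b, a, b') has at most one argument outside B,
  so it lies in B by absorption.\<close>

fun subst :: "(nat \<Rightarrow> 'f trm) \<Rightarrow> 'f trm \<Rightarrow> 'f trm" where
  "subst s (Var i) = s i"
| "subst s (Op f ts) = Op f (map (subst s) ts)"

lemma eval_subst:
  "wf_trm ar n t \<Longrightarrow> eval op xs (subst s t) = eval op (map (\<lambda>j. eval op xs (s j)) [0..<n]) t"
proof (induction t)
  case (Op f ts)
  then show ?case by (simp cong: map_cong)
qed simp

lemma wf_subst:
  "wf_trm ar n t \<Longrightarrow> (\<And>j. j < n \<Longrightarrow> wf_trm ar m (s j)) \<Longrightarrow> wf_trm ar m (subst s t)"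
  by (induction t) auto

definition window :: "nat \<Rightarrow> nat \<Rightarrow> 'a \<Rightarrow> 'a \<Rightarrow> 'a \<Rightarrow> 'a list" where
  "window n i x y z = map (\<lambda>j. if Suc j < i then z else if Suc j = i then y else x) [0..<n]"

definition window_var :: "nat \<Rightarrow> nat \<Rightarrow> 'f trm" where
  "window_var i j = (if Suc j < i then Var 2 else if Suc j = i then Var 1 else Var 0)"

lemma length_window [simp]: "length (window n i x y z) = n"
  by (simp add: window_def)

lemma set_window_subset: "set (window n i x y z) \<subseteq> {x, y, z}"
  by (auto simp: window_def)

lemma window_0: "window n 0 x y z = replicate n x"
  by (simp add: window_def map_replicate_const)

lemma window_beyond: "n < i \<Longrightarrow> window n i x y z = replicate n z"
  by (auto simp: window_def intro: nth_equalityI)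

lemma window_Suc_link: "window n i x y y = window n (Suc i) x x y"
  by (auto simp: window_def)

lemma card_window_outside_le_1:
  assumes "x \<in> B" "z \<in> B"
  shows "card {j. j < n \<and> window n i x y z ! j \<notin> B} \<le> 1"
proof -
  have "{j. j < n \<and> window n i x y z ! j \<notin> B} \<subseteq> {i - 1}"
    using assms by (auto simp: window_def split: if_splits)
  then show ?thesis
    using card_mono[of "{i - 1}"] by fastforce
qed

lemma wf_subst_window_var: "wf_trm ar n t \<Longrightarrow> wf_trm ar 3 (subst (window_var i) t)"
  by (erule wf_subst) (simp add: window_var_def)

lemma eval_window_var:
  "eval op [x, y, z] (window_var i j) = (if Suc j < i then z else if Suc j = i then y else x)"
  by (simp add: window_var_def)

lemma eval_subst_window_var:
  "wf_trm ar n t \<Longrightarrow> eval op [x, y, z] (subst (window_var i) t) = eval op (window n i x y z) t"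
  by (simp add: eval_subst eval_window_var window_def)

theorem proposition2p2:
  fixes A B :: "'a set" and ar :: "'f \<Rightarrow> nat" and op :: "'f \<Rightarrow> 'a list \<Rightarrow> 'a"
  assumes "algebra A ar op"
    and "subuniverse B A ar op"
    and "absorbs B A ar op"
  shows "jonsson_absorbs B A ar op"
proof -
  obtain n t where wf: "wf_trm ar n t" and idem: "idempotent_term A op n t"
    and absorb: "\<And>as. length as = n \<Longrightarrow> set as \<subseteq> A \<Longrightarrow> card {i. i < n \<and> as ! i \<notin> B} \<le> 1
            \<Longrightarrow> eval op as t \<in> B"
    using assms(3) unfolding absorbs_def by blast
  have "B \<subseteq> A"
    using assms(2) unfolding subuniverse_def by blast
  then have "eval op (window n i b a b') t \<in> B" if "b \<in> B" "b' \<in> B" "a \<in> A" for i b a b'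
    using that set_window_subset[of n i b a b'] card_window_outside_le_1[of b B b' n i a]
    by (intro absorb) auto
  moreover have "eval op (replicate n x) t = x" if "x \<in> A" for x
    using idem that unfolding idempotent_term_def by blast
  ultimately show ?thesis
    unfolding jonsson_absorbs_def
    by (intro exI[of _ "Suc n"] exI[of _ "\<lambda>i. subst (window_var i) t"])
      (simp add: wf_subst_window_var[OF wf] eval_subst_window_var[OF wf]
        window_0 window_beyond window_Suc_link)
qed

end
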